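(* Let $\mathcal V$ be a finite set, let $P_h$ and $\pi$ be probability distributions on $\mathcal V$, let $x^*\in\arg\max_{x\in\mathcal V}P_h(x)$, and let $q:=1-P_h(x^* )$. Then for every subset $A\subseteq\mathcal V$, $$\pi(A)-P_h(A)\le \max\bigl\{1-\pi(x^* ),\,q\bigr\},$$ and moreover $$1-\pi(x^* )\le \sup\Bigl\{\lambda\in[0,1]:\ d_{\mathrm{kl}}(\lambda\,\|\,q)\le D_{\mathrm{KL}}(\pi\,\|\,P_h)\Bigr\}.$$
   Context: $\pi(A)=\sum_{x\in A}\pi(x)$; $D_{\mathrm{KL}}(\pi\|P_h)=\sum_x \pi(x)\log\frac{\pi(x)}{P_h(x)}\in[0,+\infty]$. The binary KL divergence is $d_{\mathrm{kl}}(p\|q):=p\log\frac{p}{q}+(1-p)\log\frac{1-p}{1-q}$ for $p,q\in[0,1]$, with the conventions $0\log(0/q):=0$ for $q\in[0,1]$ (including $0\log(0/0)=0$) and $b\log(b/0):=+\infty$ for $b>0$. *)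

theory Defs
  imports "HOL-Analysis.Analysis" "HOL-Library.Extended_Real"
begin

definition xlogxy :: "real \<Rightarrow> real \<Rightarrow> ereal" where
  "xlogxy a b = (if a = 0 then 0 else if b = 0 then \<infinity> else ereal (a * ln (a / b)))"

definition dkl :: "real \<Rightarrow> real \<Rightarrow> ereal" where
  "dkl p q = xlogxy p q + xlogxy (1 - p) (1 - q)"

definition KL_div :: "'a set \<Rightarrow> ('a \<Rightarrow> real) \<Rightarrow> ('a \<Rightarrow> real) \<Rightarrow> ereal" where
  "KL_div V pp P = (\<Sum>x\<in>V. xlogxy (pp x) (P x))"

definition is_distribution :: "'a set \<Rightarrow> ('a \<Rightarrow> real) \<Rightarrow> bool" where
  "is_distribution V p \<longleftrightarrow> (\<forall>x\<in>V. 0 \<le> p x) \<and> (\<Sum>x\<in>V. p x) = 1"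

end

theory Submission
  imports Defs
begin

text \<open>
  Neither bound needs \<open>x\<^sup>*\<close> to maximise \<open>P\<^sub>h\<close>: both hold for every point \<open>x\<close> of \<open>\<V>\<close>.
  If \<open>x \<in> A\<close> then \<open>\<pi>(A) - P\<^sub>h(A) \<le> 1 - P\<^sub>h(x)\<close>, otherwise \<open>\<pi>(A) \<le> 1 - \<pi>(x)\<close>.
  Merging the points of \<open>\<V> - {x}\<close> into one atom turns \<open>\<pi>\<close> and \<open>P\<^sub>h\<close> into the Bernoulli
  distributions with parameters \<open>1 - \<pi>(x)\<close> and \<open>1 - P\<^sub>h(x)\<close>; by the log-sum inequality
  this coarsening does not increase the KL divergence, so \<open>1 - \<pi>(x)\<close> itself lies in the set
  whose supremum is taken.
\<close>

lemma xlogxy_ge_tangent: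
  fixes a b c :: real
  assumes "0 \<le> a" "0 \<le> b" "0 < c"
  shows "ereal (a * ln c + a - b * c) \<le> xlogxy a b"
proof -
  consider "a = 0" | "a > 0" "b = 0" | "a > 0" "b > 0"
    using assms by linarith
  then show ?thesis
  proof cases
    case 1
    then show ?thesis using assms by (simp add: xlogxy_def)
  next
    case 2
    then show ?thesis by (simp add: xlogxy_def)
  next
    case 3
    define y where "y = b * c / a"
    have "y > 0" using 3 assms by (simp add: y_def)
    have "a * ln (a / b) = a * ln c - a * ln y"
      using 3 assms by (simp add: y_def ln_div ln_mult algebra_simps)
    moreover have "a * ln y \<le> a * (y - 1)"
      using ln_le_minus_one[OF \<open>y > 0\<close>] 3 by simp
    moreover have "a * y = b * c"
      using 3 by (simp add: y_def)
    ultimately show ?thesis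
      using 3 by (simp add: xlogxy_def algebra_simps)
  qed
qed

text \<open>The log-sum inequality; the tangent bound above is applied with the ratio of the totals.\<close>
lemma xlogxy_sum_le:
  fixes a b :: "'a \<Rightarrow> real"
  assumes "finite B" and a_nonneg: "\<forall>x\<in>B. 0 \<le> a x" and b_nonneg: "\<forall>x\<in>B. 0 \<le> b x"
  shows "xlogxy (sum a B) (sum b B) \<le> (\<Sum>x\<in>B. xlogxy (a x) (b x))"
proof -
  have sum_a_eq_0: "sum a B = 0 \<longleftrightarrow> (\<forall>x\<in>B. a x = 0)"
    using sum_nonneg_eq_0_iff[OF \<open>finite B\<close>] a_nonneg by blast
  have sum_b_eq_0: "sum b B = 0 \<longleftrightarrow> (\<forall>x\<in>B. b x = 0)"
    using sum_nonneg_eq_0_iff[OF \<open>finite B\<close>] b_nonneg by blast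
  consider "sum a B = 0" | "sum a B > 0" "sum b B = 0" | "sum a B > 0" "sum b B > 0"
    using sum_nonneg[of B a] sum_nonneg[of B b] a_nonneg b_nonneg by fastforce
  then show ?thesis
  proof cases
    case 1
    then show ?thesis using sum_a_eq_0 by (simp add: xlogxy_def)
  next
    case 2
    then obtain x where "x \<in> B" "a x \<noteq> 0" "b x = 0"
      using sum_a_eq_0 sum_b_eq_0 by auto
    then have "(\<Sum>x\<in>B. xlogxy (a x) (b x)) = \<infinity>"
      using \<open>finite B\<close> by (auto simp: sum_Pinfty xlogxy_def)
    then show ?thesis by simp
  next
    case 3
    define c where "c = sum a B / sum b B"
    have "c > 0" using 3 by (simp add: c_def)
    have "(\<Sum>x\<in>B. b x * c) = sum b B * c"
      by (simp add: sum_distrib_right)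
    also have "\<dots> = sum a B"
      using 3 by (simp add: c_def)
    finally have "(\<Sum>x\<in>B. b x * c) = sum a B" .
    then have "xlogxy (sum a B) (sum b B) = ereal (\<Sum>x\<in>B. a x * ln c + a x - b x * c)"
      using 3 by (simp add: xlogxy_def c_def sum.distrib sum_subtractf
          flip: sum_distrib_right)
    also have "\<dots> = (\<Sum>x\<in>B. ereal (a x * ln c + a x - b x * c))"
      by (simp add: sum_ereal)
    also have "\<dots> \<le> (\<Sum>x\<in>B. xlogxy (a x) (b x))"
      using a_nonneg b_nonneg \<open>c > 0\<close> by (intro sum_mono xlogxy_ge_tangent) auto
    finally show ?thesis .
  qed
qed

lemma distribution_sum_le_1:
  assumes "finite V" "is_distribution V p" "A \<subseteq> V"
  shows "sum p A \<le> 1"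
  using sum_mono2[OF assms(1,3), of p] assms(2) by (auto simp: is_distribution_def)

lemma distribution_sum_remove:
  assumes "finite V" "is_distribution V p" "x \<in> V"
  shows "sum p (V - {x}) = 1 - p x"
  using sum_diff1[OF assms(1), of p x] assms(2,3) by (simp add: is_distribution_def)

lemma distribution_mass_difference_le:
  assumes "finite V" "is_distribution V P" "is_distribution V \<pi>" "x \<in> V" "A \<subseteq> V"
  shows "sum \<pi> A - sum P A \<le> max (1 - \<pi> x) (1 - P x)"
proof -
  have "finite A" using assms(1,5) finite_subset by blast
  show ?thesis
  proof (cases "x \<in> A")
    case True
    then have "P x \<le> sum P A"
      using \<open>finite A\<close> assms(2,5) by (intro member_le_sum) (auto simp: is_distribution_def)
    then show ?thesis using distribution_sum_le_1[OF assms(1,3,5)] by simp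
  next
    case False
    have "sum \<pi> (insert x A) \<le> 1"
      using assms by (intro distribution_sum_le_1) auto
    then have "sum \<pi> A \<le> 1 - \<pi> x" using False \<open>finite A\<close> by simp
    moreover have "0 \<le> sum P A"
      using assms(2,5) by (intro sum_nonneg) (auto simp: is_distribution_def)
    ultimately show ?thesis by simp
  qed
qed

lemma dkl_le_KL_div:
  assumes "finite V" "is_distribution V P" "is_distribution V \<pi>" "x \<in> V"
  shows "dkl (1 - \<pi> x) (1 - P x) \<le> KL_div V \<pi> P"
proof -
  have "dkl (1 - \<pi> x) (1 - P x)
      = xlogxy (sum \<pi> (V - {x})) (sum P (V - {x})) + xlogxy (\<pi> x) (P x)"
    using assms by (simp add: dkl_def distribution_sum_remove)
  also have "\<dots> \<le> (\<Sum>y\<in>V - {x}. xlogxy (\<pi> y) (P y)) + xlogxy (\<pi> x) (P x)"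
    using assms by (intro add_right_mono xlogxy_sum_le) (auto simp: is_distribution_def)
  also have "\<dots> = KL_div V \<pi> P"
    unfolding KL_div_def
    using sum.remove[OF assms(1,4), of "\<lambda>y. xlogxy (\<pi> y) (P y)"] by (simp add: add.commute)
  finally show ?thesis .
qed

theorem mainTheorem2:
  fixes V :: "'a set" and Ph Pi :: "'a \<Rightarrow> real" and xstar :: 'a and q :: real
  assumes "finite V"
    and "is_distribution V Ph"
    and "is_distribution V Pi"
    and "xstar \<in> V" and "\<forall>x\<in>V. Ph x \<le> Ph xstar"
    and "q = 1 - Ph xstar"
  shows "(\<forall>A\<subseteq>V. (\<Sum>x\<in>A. Pi x) - (\<Sum>x\<in>A. Ph x) \<le> max (1 - Pi xstar) q)
       \<and> 1 - Pi xstar \<le> Sup {l::real. 0 \<le> l \<and> l \<le> 1 \<and> dkl l q \<le> KL_div V Pi Ph}"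
proof
  show "\<forall>A\<subseteq>V. (\<Sum>x\<in>A. Pi x) - (\<Sum>x\<in>A. Ph x) \<le> max (1 - Pi xstar) q"
    using distribution_mass_difference_le[OF assms(1-4)] assms(6) by blast
  have "0 \<le> Pi xstar"
    using assms(3,4) by (simp add: is_distribution_def)
  moreover have "Pi xstar \<le> 1"
    using distribution_sum_le_1[OF assms(1,3), of "{xstar}"] assms(4) by simp
  ultimately have "1 - Pi xstar \<in> {l. 0 \<le> l \<and> l \<le> 1 \<and> dkl l q \<le> KL_div V Pi Ph}"
    using dkl_le_KL_div[OF assms(1-4)] assms(6) by simp
  moreover have "bdd_above {l::real. 0 \<le> l \<and> l \<le> 1 \<and> dkl l q \<le> KL_div V Pi Ph}"
    by (rule bdd_aboveI[of _ 1]) auto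
  ultimately show "1 - Pi xstar \<le> Sup {l::real. 0 \<le> l \<and> l \<le> 1 \<and> dkl l q \<le> KL_div V Pi Ph}"
    by (rule cSup_upper)
qed

end
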